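(* Let $\mathfrak g$ be a complex vector space equipped with a bilinear multiplication $[\ ,\ ]:\mathfrak g\otimes\mathfrak g\to\mathfrak g$, and let $\tilde{\mathfrak g}=\mathfrak g\oplus\mathbb C$. For $\lambda\in\mathbb C$ define $\mathfrak R(\lambda):\tilde{\mathfrak g}\otimes\tilde{\mathfrak g}\to\tilde{\mathfrak g}\otimes\tilde{\mathfrak g}$ by $\mathfrak R(\lambda)\big((x+\alpha)\otimes(y+\beta)\big)=(y+\beta)\otimes(x+\alpha)+[x,y]\otimes\lambda$ for $x,y\in\mathfrak g$, $\alpha,\beta\in\mathbb C$. Let $\sigma:\tilde{\mathfrak g}\otimes\tilde{\mathfrak g}\to\tilde{\mathfrak g}\otimes\tilde{\mathfrak g}$ be the flip $u\otimes v\mapsto v\otimes u$ and set $\mathfrak R_{21}(\lambda)=\sigma\,\mathfrak R(\lambda)\,\sigma$. Then for every $\lambda\in\mathbb C$, $$\mathfrak R(\lambda)\mathfrak R_{21}(-\lambda)=\mathfrak R_{21}(\lambda)\mathfrak R(-\lambda)=1.$$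
   Context: All tensor products are over $\mathbb C$; $\lambda$ and $[x,y]$ are regarded as elements of $\tilde{\mathfrak g}=\mathfrak g\oplus\mathbb C$ via the obvious inclusions. *)

theory Defs
  imports "HOL-Analysis.Analysis"
begin

text \<open>Complex vector spaces are modelled with the generic locale vector_space of
HOL (scalar multiplication given as an explicit function with complex scalars).\<close>

text \<open>Scalar multiplication on g~ = g (+) C, elements written as pairs (x, alpha).\<close>
definition gt_scale :: "(complex \<Rightarrow> 'g \<Rightarrow> 'g) \<Rightarrow> complex \<Rightarrow> 'g \<times> complex \<Rightarrow> 'g \<times> complex" where
  "gt_scale s c p = (s c (fst p), c * snd p)"

definition bilin :: "('k::field \<Rightarrow> 'a::ab_group_add \<Rightarrow> 'a) \<Rightarrow> ('k \<Rightarrow> 'b::ab_group_add \<Rightarrow> 'b)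
    \<Rightarrow> ('k \<Rightarrow> 'c::ab_group_add \<Rightarrow> 'c) \<Rightarrow> ('a \<Rightarrow> 'b \<Rightarrow> 'c) \<Rightarrow> bool" where
  "bilin s1 s2 s3 B \<longleftrightarrow>
     (\<forall>y. Vector_Spaces.linear s1 s3 (\<lambda>x. B x y)) \<and> (\<forall>x. Vector_Spaces.linear s2 s3 (B x))"

text \<open>Over a field this
characterizes the tensor product up to unique isomorphism.\<close>
definition is_tensor_product :: "(complex \<Rightarrow> 'v::ab_group_add \<Rightarrow> 'v) \<Rightarrow> (complex \<Rightarrow> 't::ab_group_add \<Rightarrow> 't)
    \<Rightarrow> ('v \<Rightarrow> 'v \<Rightarrow> 't) \<Rightarrow> bool" where
  "is_tensor_product sv st tp \<longleftrightarrow>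
     vector_space st \<and> bilin sv sv st tp \<and>
     module.span st {tp u v | u v. True} = UNIV \<and>
     (\<forall>B. bilin sv sv (*) B \<longrightarrow>
        (\<exists>f. Vector_Spaces.linear st (*) f \<and> (\<forall>u v. f (tp u v) = B u v)))"

end

theory Submission
  imports Defs
begin

text \<open>Evaluate both composites on a pure tensor \<open>(x + \<alpha>) \<otimes> (y + \<beta>)\<close>. The inner
factor swaps it and adds a correction \<open>-[a,b] \<otimes> \<lambda>\<close> (or its flip); the outer factor
swaps back, which turns the correction into \<open>-[a,b] \<otimes> \<lambda>\<close>, and adds \<open>[a,b] \<otimes> \<lambda>\<close>.
On the correction the outer factor creates no further term, as that would be a
bracket with the \<open>\<complex>\<close>-summand, \<open>[0,z] = 0\<close>. So both composites fix all pure
tensors, and being linear they are the identity, because pure tensors span.\<close>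

lemma bilin_module_hom_left: "bilin s1 s2 s3 B \<Longrightarrow> module_hom s1 s3 (\<lambda>x. B x y)"
  by (simp add: bilin_def linear_iff_module_hom)

lemma bilin_module_hom_right: "bilin s1 s2 s3 B \<Longrightarrow> module_hom s2 s3 (B x)"
  by (simp add: bilin_def linear_iff_module_hom)

lemma bilin_zero_left: "bilin s1 s2 s3 B \<Longrightarrow> B 0 y = 0"
  using module_hom.zero[OF bilin_module_hom_left] .

lemma bilin_minus_left: "bilin s1 s2 s3 B \<Longrightarrow> B (- x) y = - B x y"
  using module_hom.neg[OF bilin_module_hom_left] .

lemma bilin_minus_right: "bilin s1 s2 s3 B \<Longrightarrow> B x (- y) = - B x y"
  using module_hom.neg[OF bilin_module_hom_right] .

locale bracket_R_matrix =
  fixes sg :: "complex \<Rightarrow> 'g::ab_group_add \<Rightarrow> 'g"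
    and br :: "'g \<Rightarrow> 'g \<Rightarrow> 'g"
    and st :: "complex \<Rightarrow> 't::ab_group_add \<Rightarrow> 't"
    and tp :: "'g \<times> complex \<Rightarrow> 'g \<times> complex \<Rightarrow> 't"
    and R :: "complex \<Rightarrow> 't \<Rightarrow> 't"
    and \<sigma> :: "'t \<Rightarrow> 't"
  assumes br_bilin: "bilin sg sg sg br"
    and tp_bilin: "bilin (gt_scale sg) (gt_scale sg) st tp"
    and tp_span: "module.span st {tp u v | u v. True} = UNIV"
    and R_linear: "Vector_Spaces.linear st st (R lam)"
    and R_tp: "R lam (tp (x, \<alpha>) (y, \<beta>)) = tp (y, \<beta>) (x, \<alpha>) + tp (br x y, 0) (0, lam)"
    and \<sigma>_linear: "Vector_Spaces.linear st st \<sigma>"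
    and \<sigma>_tp: "\<sigma> (tp u v) = tp v u"
begin

lemma R_add: "R lam (a + b) = R lam a + R lam b"
  using module_hom.add R_linear by (metis linear_iff_module_hom)

lemma R_diff: "R lam (a - b) = R lam a - R lam b"
  using module_hom.diff R_linear by (metis linear_iff_module_hom)

lemma \<sigma>_add: "\<sigma> (a + b) = \<sigma> a + \<sigma> b"
  using module_hom.add \<sigma>_linear by (metis linear_iff_module_hom)

lemma \<sigma>_diff: "\<sigma> (a - b) = \<sigma> a - \<sigma> b"
  using module_hom.diff \<sigma>_linear by (metis linear_iff_module_hom)

lemma tp_scalar_uminus: "tp (0, - c) v = - tp (0, c) v" "tp u (0, - c) = - tp u (0, c)"
  using bilin_minus_left[OF tp_bilin, of "(0, c)"] bilin_minus_right[OF tp_bilin, of u "(0, c)"]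
  by simp_all

lemma R_\<sigma>_R_\<sigma>_tp: "R lam (\<sigma> (R (- lam) (\<sigma> (tp u v)))) = tp u v"
proof -
  obtain x \<alpha> y \<beta> where "u = (x, \<alpha>)" "v = (y, \<beta>)" by fastforce
  then show ?thesis
    by (simp add: R_tp \<sigma>_tp R_add R_diff \<sigma>_add \<sigma>_diff tp_scalar_uminus
        bilin_zero_left[OF br_bilin] bilin_zero_left[OF tp_bilin, unfolded zero_prod_def])
qed

lemma \<sigma>_R_\<sigma>_R_tp: "\<sigma> (R lam (\<sigma> (R (- lam) (tp u v)))) = tp u v"
proof -
  obtain x \<alpha> y \<beta> where "u = (x, \<alpha>)" "v = (y, \<beta>)" by fastforce
  then show ?thesis
    by (simp add: R_tp \<sigma>_tp R_add R_diff \<sigma>_add \<sigma>_diff tp_scalar_uminus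
        bilin_zero_left[OF br_bilin] bilin_zero_left[OF tp_bilin, unfolded zero_prod_def])
qed

lemma linear_eq_id_if_fixes_tp:
  assumes "Vector_Spaces.linear st st f" and "\<And>u v. f (tp u v) = tp u v"
  shows "f = id"
proof
  fix w
  interpret vector_space_pair st st
    using assms(1) by (simp add: vector_space_pair_def Vector_Spaces.linear_def)
  have "w \<in> vs1.span {tp u v | u v. True}"
    using tp_span by simp
  then show "f w = id w"
    by (rule linear_eq_on[OF assms(1) vs1.linear_id]) (auto simp: assms(2))
qed

lemma R_R21_inverse: "R lam \<circ> (\<sigma> \<circ> R (- lam) \<circ> \<sigma>) = id"
  by (rule linear_eq_id_if_fixes_tp)
    (meson Vector_Spaces.linear_compose R_linear \<sigma>_linear, simp add: R_\<sigma>_R_\<sigma>_tp)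

lemma R21_R_inverse: "(\<sigma> \<circ> R lam \<circ> \<sigma>) \<circ> R (- lam) = id"
  by (rule linear_eq_id_if_fixes_tp)
    (meson Vector_Spaces.linear_compose R_linear \<sigma>_linear, simp add: \<sigma>_R_\<sigma>_R_tp)

end

theorem lemma1p1p2:
  fixes sg :: "complex \<Rightarrow> 'g::ab_group_add \<Rightarrow> 'g"
    and br :: "'g \<Rightarrow> 'g \<Rightarrow> 'g"
    and st :: "complex \<Rightarrow> 't::ab_group_add \<Rightarrow> 't"
    and tp :: "'g \<times> complex \<Rightarrow> 'g \<times> complex \<Rightarrow> 't"
    and R :: "complex \<Rightarrow> 't \<Rightarrow> 't"
    and \<sigma> :: "'t \<Rightarrow> 't"
  assumes g_vs: "vector_space sg"
    and br_bilin: "bilin sg sg sg br"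
    and tensor: "is_tensor_product (gt_scale sg) st tp"
    and R_lin: "\<And>lam. Vector_Spaces.linear st st (R lam)"
    and R_def: "\<And>lam x \<alpha> y \<beta>. R lam (tp (x, \<alpha>) (y, \<beta>)) = tp (y, \<beta>) (x, \<alpha>) + tp (br x y, 0) (0, lam)"
    and \<sigma>_lin: "Vector_Spaces.linear st st \<sigma>"
    and \<sigma>_def: "\<And>u v. \<sigma> (tp u v) = tp v u"
  shows "\<forall>lam. R lam \<circ> (\<sigma> \<circ> R (-lam) \<circ> \<sigma>) = id \<and> (\<sigma> \<circ> R lam \<circ> \<sigma>) \<circ> R (-lam) = id"
proof -
  interpret bracket_R_matrix sg br st tp R \<sigma>
    using br_bilin tensor R_lin R_def \<sigma>_lin \<sigma>_def
    unfolding bracket_R_matrix_def is_tensor_product_def by blast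
  show ?thesis
    using R_R21_inverse R21_R_inverse by blast
qed

end
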